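(* Let $\mathcal{P}$ and $\mathcal{Q}$ be smooth regular curves with endpoints $p_0,p_1$ and $q_0,q_1$ respectively. Let $\ell_0$ be the line through $q_0$ parallel to $T_{q_1}\mathcal{Q}$, and $\ell_p'$ the line through $\tau_{q_0-p_0}(p_1)$ parallel to $T_{q_0}\mathcal{Q}$. Put $c=\ell_p'\cap T_{q_1}\mathcal{Q}$, $b_0=\ell_0\cap\ell_p'$, $b_1=T_{q_0}\mathcal{Q}\cap T_{q_1}\mathcal{Q}$. Assume: (i) $T_{p_i}\mathcal{P}\parallel T_{q_i}\mathcal{Q}$ for $i=0,1$; (ii) the curvature of $\mathcal{P}$ is positive and the curvature of $\mathcal{Q}$ is negative; (iii) the absolute values of the rotation numbers of $\mathcal{P}$ and $\mathcal{Q}$ are equal and smaller than $\frac12$; (iv) for every $p\in\mathcal{P}$ there is $q\in\mathcal{Q}$, and for every $q\in\mathcal{Q}$ there is $p\in\mathcal{P}$, such that $p,q$ is a parallel pair; (v) $\mathcal{P}$ and $\mathcal{Q}$ are curved in the same side at every parallel pair $p,q$ with $p\in\mathcal{P}$, $q\in\mathcal{Q}$. Let $\rho_{\max}$ and $\rho_{\min}$ be the maximum and the minimum of the set $\left\{\frac{c-b_1}{q_1-b_1},\ \frac{c-b_0}{\tau_{q_0-p_0}(p_1)-b_0}\right\}$. If $\rho_{\max}<1$ or $\rho_{\min}>1$, then the Centre Symmetry Set of $\mathcal{P}\cup\mathcal{Q}$ has at least one asymptote.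
   Context: $T_q\mathcal{C}$ is the tangent line to $\mathcal{C}$ at $q$; $\tau_v$ is translation by $v\in\mathbb{R}^2$. The quotient $\frac{u}{w}$ of two parallel vectors, $w\ne0$, is the real number $\lambda$ with $u=\lambda w$. The rotation number of a regular arc is the total signed turning of its velocity vector divided by $2\pi$. Distinct points $p,q$ form a parallel pair if their tangent lines are parallel. Curves are curved in the same side at a parallel pair $p,q$ (non-inflexion points) if the germ at $p$ and the translate by $p-q$ of the germ at $q$ lie on the same side of the tangent line at $p$. The Centre Symmetry Set is the envelope of lines through parallel pairs; a parallel pair $p,q$ gives an asymptote (the line through $p,q$) if, for local arc-length parameterizations $g$ near $p=g(t)$ and $f$ near $q=f(s)$ with $f'(s)=-g'(t)$, one has $\kappa_f(s)+\kappa_g(t)=0$. *)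

theory Defs
  imports "HOL-Analysis.Analysis"
begin

text \<open>The Euclidean plane is modelled by the complex numbers.
  A curve is given by a parametrisation on the closed interval [0,1].\<close>

definition cross :: "complex \<Rightarrow> complex \<Rightarrow> real" where
  "cross u v = Im (cnj u * v)"

definition dotp :: "complex \<Rightarrow> complex \<Rightarrow> real" where
  "dotp u v = Re (cnj u * v)"

definition vd :: "(real \<Rightarrow> complex) \<Rightarrow> real \<Rightarrow> complex" where
  "vd f t = vector_derivative f (at t)"

definition smooth_on :: "real set \<Rightarrow> (real \<Rightarrow> complex) \<Rightarrow> bool" where
  "smooth_on S f \<longleftrightarrow> (\<forall>n. \<forall>t\<in>S. ((vd ^^ n) f) differentiable (at t))"

definition smooth_regular_arc :: "(real \<Rightarrow> complex) \<Rightarrow> bool" where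
  "smooth_regular_arc f \<longleftrightarrow>
     (\<exists>S. open S \<and> {0..1} \<subseteq> S \<and> smooth_on S f) \<and>
     inj_on f {0..1} \<and> (\<forall>t\<in>{0..1}. vd f t \<noteq> 0)"

definition curvature :: "(real \<Rightarrow> complex) \<Rightarrow> real \<Rightarrow> real" where
  "curvature f t = cross (vd f t) (vd (vd f) t) / (norm (vd f t)) ^ 3"

definition rotation_number :: "(real \<Rightarrow> complex) \<Rightarrow> real \<Rightarrow> bool" where
  "rotation_number f r \<longleftrightarrow>
     (\<exists>\<theta>. continuous_on {0..1} \<theta> \<and>
          (\<forall>t\<in>{0..1}. vd f t = complex_of_real (norm (vd f t)) * cis (\<theta> t)) \<and>
          r = (\<theta> 1 - \<theta> 0) / (2 * pi))"

definition line_through :: "complex \<Rightarrow> complex \<Rightarrow> complex set" where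
  "line_through a u = {a + complex_of_real r * u | r. True}"

definition line_inter :: "complex set \<Rightarrow> complex set \<Rightarrow> complex" where
  "line_inter L M = (THE x. x \<in> L \<and> x \<in> M)"

definition vquot :: "complex \<Rightarrow> complex \<Rightarrow> real" where
  "vquot u w = (THE r. u = complex_of_real r * w)"

definition transl :: "complex \<Rightarrow> complex \<Rightarrow> complex" where
  "transl v x = x + v"

definition tangent_line :: "(real \<Rightarrow> complex) \<Rightarrow> real \<Rightarrow> complex set" where
  "tangent_line f t = line_through (f t) (vd f t)"

definition parallel_pair :: "(real \<Rightarrow> complex) \<Rightarrow> real \<Rightarrow> (real \<Rightarrow> complex) \<Rightarrow> real \<Rightarrow> bool" where
  "parallel_pair f t g s \<longleftrightarrow> t \<in> {0..1} \<and> s \<in> {0..1} \<and> f t \<noteq> g s \<and>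
     cross (vd f t) (vd g s) = 0"

text \<open>curved in the same side at the pair f t, g s: the germ of f at f t and the
  translate by (f t - g s) of the germ of g at g s lie (strictly) on the same
  side of the tangent line of f at f t\<close>
definition curved_same_side :: "(real \<Rightarrow> complex) \<Rightarrow> real \<Rightarrow> (real \<Rightarrow> complex) \<Rightarrow> real \<Rightarrow> bool" where
  "curved_same_side f t g s \<longleftrightarrow>
     (\<exists>e>0. \<forall>t'\<in>{0..1}. \<forall>s'\<in>{0..1}.
        0 < \<bar>t' - t\<bar> \<and> \<bar>t' - t\<bar> < e \<and> 0 < \<bar>s' - s\<bar> \<and> \<bar>s' - s\<bar> < e \<longrightarrow>
        cross (vd f t) (f t' - f t) * cross (vd f t) (transl (f t - g s) (g s') - f t) > 0)"

text \<open>the parallel pair f t, g s gives an asymptote: with arc-length parametrisations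
  oriented with unit tangent u = f'(t)/|f'(t)| at f t and -u at g s, the curvatures add
  to zero. The arc-length curvature of g oriented by -u equals -(u.v) * curvature g s,
  where v is the unit tangent of g at s (v = +-u).\<close>
definition gives_asymptote :: "(real \<Rightarrow> complex) \<Rightarrow> real \<Rightarrow> (real \<Rightarrow> complex) \<Rightarrow> real \<Rightarrow> bool" where
  "gives_asymptote f t g s \<longleftrightarrow>
     parallel_pair f t g s \<and>
     (let u = vd f t / complex_of_real (norm (vd f t));
          v = vd g s / complex_of_real (norm (vd g s))
      in curvature f t + (- dotp u v * curvature g s) = 0)"

definition CSS_has_asymptote :: "(real \<Rightarrow> complex) list \<Rightarrow> bool" where
  "CSS_has_asymptote cs \<longleftrightarrow>
     (\<exists>f\<in>set cs. \<exists>g\<in>set cs. \<exists>t s. gives_asymptote f t g s)"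

end

theory Submission
  imports Defs
begin

text \<open>Traverse \<open>Q\<close> backwards. Both arcs then turn to the left, and the same-side condition together
  with the equal rotation numbers forces their tangent angles to sweep one and the same interval
  \<open>[\<alpha>, \<beta>]\<close> of length less than \<open>\<pi>\<close>. Parametrised by this angle \<open>y\<close>, each arc has velocity
  \<open>r(y) cis y\<close> with \<open>r\<close> its radius of curvature, so each chord, \<open>p\<^sub>1 - p\<^sub>0\<close> and \<open>q\<^sub>1 - q\<^sub>0\<close>,
  lies in the open sector spanned by \<open>cis \<alpha>\<close> and \<open>cis \<beta>\<close>. The points of the two arcs with
  tangent angle \<open>y\<close> form a parallel pair, which gives an asymptote exactly when the two radii agree.
  Without asymptotes the difference of the radii has constant sign, so the difference of the chords
  lies in the sector as well, up to sign: in coordinates with respect to \<open>cis \<alpha>, cis \<beta>\<close> both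
  coordinates of \<open>p\<^sub>1 - p\<^sub>0\<close> exceed those of \<open>q\<^sub>1 - q\<^sub>0\<close>, or both are smaller. The two ratios of
  the hypothesis are exactly the quotients of corresponding coordinates, taken in opposite order, so
  one of them is below and the other above 1.\<close>

section \<open>Vectors in the plane\<close>

lemma cross_commute: "cross u v = - cross v u"
  unfolding cross_def by (simp add: algebra_simps)

lemma cross_self [simp]: "cross u u = 0"
  unfolding cross_def by (simp add: complex_mult_cnj)

lemma cross_of_real_mult [simp]:
  "cross (of_real r * u) v = r * cross u v" "cross u (of_real r * v) = r * cross u v"
  unfolding cross_def by (auto simp: algebra_simps)

lemma dotp_of_real_mult [simp]:
  "dotp (of_real r * u) v = r * dotp u v" "dotp u (of_real r * v) = r * dotp u v"
  unfolding dotp_def by (auto simp: algebra_simps)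

lemma cross_minus [simp]: "cross (- u) v = - cross u v" "cross u (- v) = - cross u v"
  unfolding cross_def by auto

lemma dotp_minus [simp]: "dotp (- u) v = - dotp u v" "dotp u (- v) = - dotp u v"
  unfolding dotp_def by auto

lemma cross_diff: "cross u (v - w) = cross u v - cross u w" "cross (v - w) u = cross v u - cross w u"
  unfolding cross_def by (auto simp: algebra_simps)

lemma cross_cis: "cross (cis x) (cis y) = sin (y - x)"
  unfolding cross_def by (simp add: sin_diff algebra_simps)

lemma dotp_cis: "dotp (cis x) (cis y) = cos (y - x)"
  unfolding dotp_def by (simp add: cos_diff algebra_simps)

lemma cross_decomposition:
  assumes "cross a b \<noteq> 0"
  shows "D = of_real (cross D b / cross a b) * a + of_real (cross a D / cross a b) * b"
proof -
  have "of_real (cross a b) * D = of_real (cross D b) * a + of_real (cross a D) * b"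
    unfolding cross_def by (simp add: complex_eq_iff algebra_simps)
  then have "D = of_real (1 / cross a b) * (of_real (cross D b) * a + of_real (cross a D) * b)"
    using assms by (simp add: field_simps)
  then show ?thesis
    by (simp add: algebra_simps)
qed

lemma cross_eq_0_imp_scaled:
  assumes "cross u v = 0" "v \<noteq> 0"
  shows "u = of_real (dotp u v / (norm v)\<^sup>2) * v"
proof -
  have "(norm v)\<^sup>2 \<noteq> 0"
    using assms(2) by simp
  moreover have "of_real ((norm v)\<^sup>2) * u = of_real (dotp u v) * v"
    using assms(1) unfolding cross_def dotp_def
    by (simp add: complex_eq_iff cmod_power2 algebra_simps) algebra
  ultimately show ?thesis
    by (simp add: field_simps)
qed

lemma same_direction_if_cross_eq_0_dotp_nonneg:
  assumes "cross u v = 0" "0 \<le> dotp u v" "u \<noteq> 0" "v \<noteq> 0"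
  obtains c where "0 < c" "u = of_real c * v"
proof -
  define c where "c = dotp u v / (norm v)\<^sup>2"
  have u: "u = of_real c * v"
    unfolding c_def using cross_eq_0_imp_scaled assms(1,4) .
  then have "c \<noteq> 0"
    using assms(3) by auto
  moreover have "0 \<le> c"
    using assms(2) by (simp add: c_def)
  ultimately have "0 < c"
    by simp
  then show ?thesis
    using that u by blast
qed

lemma cis_eq_if_cross_eq_0_dotp_pos:
  assumes "cross (cis x) (cis y) = 0" "0 < dotp (cis x) (cis y)"
  shows "cis x = cis y"
proof -
  have "cos (y - x) = 1"
    using assms sin_cos_squared_add[of "y - x"] by (auto simp: cross_cis dotp_cis power2_eq_1_iff)
  then have "cis (y - x) = 1"
    using assms(1) by (simp add: cross_cis complex_eq_iff)
  then show ?thesis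
    by (simp add: cis_divide[symmetric])
qed

lemma cross_cis_eq_0_imp_eq:
  assumes "x \<in> {\<alpha>..\<beta>}" "y \<in> {\<alpha>..\<beta>}" "\<beta> - \<alpha> < pi" "cross (cis x) (cis y) = 0"
  shows "x = y"
  using assms sin_eq_0_pi[of "y - x"] by (auto simp: cross_cis)

definition open_sector :: "complex \<Rightarrow> complex \<Rightarrow> complex set" where
  "open_sector a b = {D. 0 < cross a D \<and> 0 < cross D b}"

section \<open>Lines and the tangent ratios\<close>

lemma line_through_of_real_mult:
  "k \<noteq> 0 \<Longrightarrow> line_through p (of_real k * u) = line_through p u"
  unfolding line_through_def
proof safe
  fix r
  show "\<exists>r'. p + of_real r * (of_real k * u) = p + of_real r' * u \<and> True"
    by (intro exI[of _ "r * k"]) auto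
next
  fix r assume "k \<noteq> 0"
  then show "\<exists>r'. p + of_real r * u = p + of_real r' * (of_real k * u) \<and> True"
    by (intro exI[of _ "r / k"]) auto
qed

lemma line_inter_eqI:
  assumes uw: "cross u w \<noteq> 0" and x: "x = p + of_real r * u" "x = q + of_real s * w"
  shows "line_inter (line_through p u) (line_through q w) = x"
  unfolding line_inter_def
proof (rule the_equality)
  show "x \<in> line_through p u \<and> x \<in> line_through q w"
    using x unfolding line_through_def by blast
next
  fix y assume "y \<in> line_through p u \<and> y \<in> line_through q w"
  then obtain r' s' where y: "y = p + of_real r' * u" "y = q + of_real s' * w"
    unfolding line_through_def by blast
  have "of_real (r - r') * u = x - y"
    using x(1) y(1) by (simp add: algebra_simps)
  moreover have "of_real (s - s') * w = x - y"
    using x(2) y(2) by (simp add: algebra_simps)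
  ultimately have "of_real (r - r') * u = of_real (s - s') * w"
    by simp
  then have "(r - r') * cross u u = (s - s') * cross u w"
    by (metis cross_of_real_mult(2))
  then have "s = s'"
    using uw by simp
  then show "y = x"
    using x y by simp
qed

lemma vquot_of_real_mult: "w \<noteq> 0 \<Longrightarrow> vquot (of_real r * w) w = r"
  unfolding vquot_def by (rule the_equality) auto

definition tangent_ratios ::
  "complex \<Rightarrow> complex \<Rightarrow> complex \<Rightarrow> complex \<Rightarrow> (real \<Rightarrow> complex) \<Rightarrow> real set" where
  "tangent_ratios p0 p1 q0 q1 Q =
     (let p1' = transl (q0 - p0) p1;
          l0 = line_through q0 (vd Q 0);
          lp' = line_through p1' (vd Q 1);
          c = line_inter lp' (tangent_line Q 0);
          b0 = line_inter l0 lp';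
          b1 = line_inter (tangent_line Q 1) (tangent_line Q 0)
      in {vquot (c - b1) (q1 - b1), vquot (c - b0) (p1' - b0)})"

lemma tangent_ratios_eq:
  assumes ab: "cross a b \<noteq> 0"
    and Q1: "vd Q 1 = of_real kA * a" "kA \<noteq> 0" and Q0: "vd Q 0 = of_real kB * b" "kB \<noteq> 0"
    and ends: "Q 0 = q1" "Q 1 = q0"
    and DP: "p1 - p0 = of_real xP * a + of_real yP * b"
    and DQ: "q1 - q0 = of_real xQ * a + of_real yQ * b"
    and nz: "xP \<noteq> 0" "yQ \<noteq> 0"
  shows "tangent_ratios p0 p1 q0 q1 Q = {yP / yQ, xQ / xP}"
proof -
  have a: "a \<noteq> 0" and b: "b \<noteq> 0"
    using ab unfolding cross_def by auto
  have ba: "cross b a \<noteq> 0"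
    using ab cross_commute[of b a] by simp
  define p1' where "p1' = transl (q0 - p0) p1"
  have p1': "p1' = q0 + of_real xP * a + of_real yP * b"
    using DP unfolding p1'_def transl_def by (simp add: algebra_simps)
  have q1: "q1 = q0 + of_real xQ * a + of_real yQ * b"
    using DQ by (simp add: algebra_simps)
  have lines: "line_through q0 (vd Q 0) = line_through q0 b"
    "line_through p1' (vd Q 1) = line_through p1' a"
    "tangent_line Q 0 = line_through q1 b" "tangent_line Q 1 = line_through q0 a"
    using Q0 Q1 ends by (simp_all add: tangent_line_def line_through_of_real_mult)
  have c: "line_inter (line_through p1' a) (line_through q1 b) = q0 + of_real xQ * a + of_real yP * b"
    by (rule line_inter_eqI[OF ab, where r = "xQ - xP" and s = "yP - yQ"])
       (simp_all add: p1' q1 algebra_simps)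
  have b0: "line_inter (line_through q0 b) (line_through p1' a) = q0 + of_real yP * b"
    by (rule line_inter_eqI[OF ba, where r = yP and s = "- xP"]) (simp_all add: p1' algebra_simps)
  have b1: "line_inter (line_through q0 a) (line_through q1 b) = q0 + of_real xQ * a"
    by (rule line_inter_eqI[OF ab, where r = xQ and s = "- yQ"]) (simp_all add: q1 algebra_simps)
  have "vquot (of_real yP * b) (of_real yQ * b) = yP / yQ"
    using vquot_of_real_mult[of "of_real yQ * b" "yP / yQ"] nz b by simp
  moreover have "vquot (of_real xQ * a) (of_real xP * a) = xQ / xP"
    using vquot_of_real_mult[of "of_real xP * a" "xQ / xP"] nz a by simp
  ultimately show ?thesis
    unfolding tangent_ratios_def Let_def p1'_def[symmetric] lines c b0 b1
    by (simp add: p1' q1)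
qed

lemma tangent_ratios_straddle_one:
  assumes ab: "0 < cross a b"
    and Q1: "vd Q 1 = of_real kA * a" "kA \<noteq> 0" and Q0: "vd Q 0 = of_real kB * b" "kB \<noteq> 0"
    and ends: "Q 0 = q1" "Q 1 = q0"
    and P_sector: "p1 - p0 \<in> open_sector a b" and Q_sector: "q1 - q0 \<in> open_sector a b"
    and diff: "(p1 - p0) - (q1 - q0) \<in> open_sector a b \<or> (q1 - q0) - (p1 - p0) \<in> open_sector a b"
  shows "Min (tangent_ratios p0 p1 q0 q1 Q) < 1 \<and> 1 < Max (tangent_ratios p0 p1 q0 q1 Q)"
proof -
  define xP where "xP = cross (p1 - p0) b / cross a b"
  define yP where "yP = cross a (p1 - p0) / cross a b"
  define xQ where "xQ = cross (q1 - q0) b / cross a b"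
  define yQ where "yQ = cross a (q1 - q0) / cross a b"
  have pos: "0 < xP" "0 < yP" "0 < xQ" "0 < yQ"
    using P_sector Q_sector ab unfolding xP_def yP_def xQ_def yQ_def open_sector_def by auto
  have "(xQ < xP \<and> yQ < yP) \<or> (xP < xQ \<and> yP < yQ)"
    using diff ab unfolding xP_def yP_def xQ_def yQ_def open_sector_def
    by (auto simp: cross_diff divide_strict_right_mono)
  then have "(yP / yQ < 1 \<and> 1 < xQ / xP) \<or> (1 < yP / yQ \<and> xQ / xP < 1)"
    using pos by (auto simp: field_simps)
  moreover have "tangent_ratios p0 p1 q0 q1 Q = {yP / yQ, xQ / xP}"
    using pos ab cross_decomposition[of a b "p1 - p0"] cross_decomposition[of a b "q1 - q0"]
    unfolding xP_def yP_def xQ_def yQ_def by (intro tangent_ratios_eq[OF _ Q1 Q0 ends]) auto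
  ultimately show ?thesis
    by auto
qed

section \<open>Tangent angle of a smooth regular arc\<close>

lemma smooth_regular_arcE:
  assumes "smooth_regular_arc f"
  obtains S where "open S" "{0..1} \<subseteq> S"
    "\<And>x. x \<in> S \<Longrightarrow> (f has_vector_derivative vd f x) (at x)"
    "\<And>x. x \<in> S \<Longrightarrow> (vd f has_vector_derivative vd (vd f) x) (at x)"
    "\<And>x. x \<in> S \<Longrightarrow> isCont (vd (vd f)) x"
    "\<And>t. t \<in> {0..1} \<Longrightarrow> vd f t \<noteq> 0"
proof -
  obtain S where S: "open S" "{0..1} \<subseteq> S" "smooth_on S f"
    and nz: "\<forall>t\<in>{0..1}. vd f t \<noteq> 0"
    using assms unfolding smooth_regular_arc_def by blast
  have "\<forall>t\<in>S. ((vd ^^ n) f) differentiable (at t)" for n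
    using S(3) unfolding smooth_on_def by blast
  from this[of 0] this[of 1] this[of 2]
  have "f differentiable (at x)" "vd f differentiable (at x)" "vd (vd f) differentiable (at x)"
    if "x \<in> S" for x
    using that by (auto simp: numeral_2_eq_2)
  then show ?thesis
    using that[OF S(1,2)] nz
    by (simp add: vd_def[of f] vd_def[of "vd f"] vector_derivative_works
        differentiable_imp_continuous_within)
qed

lemma smooth_regular_arc_vd_nonzero: "smooth_regular_arc f \<Longrightarrow> t \<in> {0..1} \<Longrightarrow> vd f t \<noteq> 0"
  unfolding smooth_regular_arc_def by blast

lemma cross_vd_vd_eq_curvature: "vd f t \<noteq> 0 \<Longrightarrow> cross (vd f t) (vd (vd f) t) = curvature f t * norm (vd f t) ^ 3"
  unfolding curvature_def by simp

lemma smooth_regular_arc_continuous: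
  assumes "smooth_regular_arc f"
  shows "continuous_on {0..1} f" "continuous_on {0..1} (curvature f)"
proof -
  obtain S where S: "{0..1} \<subseteq> S"
    "\<And>x. x \<in> S \<Longrightarrow> (f has_vector_derivative vd f x) (at x)"
    "\<And>x. x \<in> S \<Longrightarrow> (vd f has_vector_derivative vd (vd f) x) (at x)"
    "\<And>x. x \<in> S \<Longrightarrow> isCont (vd (vd f)) x"
    "\<And>t. t \<in> {0..1} \<Longrightarrow> vd f t \<noteq> 0"
    using smooth_regular_arcE[OF assms] by metis
  have cont: "isCont f t" "isCont (vd f) t" "isCont (vd (vd f)) t" if "t \<in> {0..1}" for t
    using S that has_vector_derivative_continuous by blast+
  show "continuous_on {0..1} f"
    using cont(1) by (intro continuous_at_imp_continuous_on) blast
  show "continuous_on {0..1} (curvature f)"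
  proof (intro continuous_at_imp_continuous_on ballI)
    fix t :: real
    assume "t \<in> {0..1}"
    then show "isCont (curvature f) t"
      unfolding curvature_def[abs_def] cross_def
      using cont(2,3) S(5) by (intro continuous_intros) auto
  qed
qed

lemma has_real_derivative_continuous_angle:
  fixes v :: "real \<Rightarrow> complex" and \<theta> :: "real \<Rightarrow> real"
  assumes v: "(v has_vector_derivative v') (at t)" and nz: "v t \<noteq> 0" and cont: "isCont \<theta> t"
    and polar: "\<forall>\<^sub>F x in nhds t. v x = of_real (norm (v x)) * cis (\<theta> x)"
  shows "(\<theta> has_real_derivative cross (v t) v' / (norm (v t))\<^sup>2) (at t)"
proof -
  have "\<forall>\<^sub>F x in nhds t. dist (\<theta> x) (\<theta> t) < pi"
    using cont unfolding isCont_def tendsto_at_iff_tendsto_nhds by (simp add: tendsto_iff)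
  moreover have "\<forall>\<^sub>F x in nhds t. dist (v x) (v t) < norm (v t)"
    using has_vector_derivative_continuous[OF v] nz
    unfolding isCont_def tendsto_at_iff_tendsto_nhds by (simp add: tendsto_iff)
  \<comment> \<open>While \<open>\<theta>\<close> stays within \<open>\<pi>\<close> of \<open>\<theta> t\<close>, it is \<open>\<theta> t\<close> plus the principal argument of \<open>v x / v t\<close>.\<close>
  ultimately have local_angle: "\<forall>\<^sub>F x in nhds t. \<theta> x = \<theta> t + Im (Ln (v x / v t))"
    using polar
  proof eventually_elim
    case (elim x)
    then have "v x \<noteq> 0"
      by (auto simp: dist_norm)
    moreover have "v x / v t = rcis (norm (v x) / norm (v t)) (\<theta> x - \<theta> t)"
      using elim(3) eventually_nhds_x_imp_x[OF polar] nz
      by (simp add: rcis_def cis_divide[symmetric] field_simps)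
    ultimately show ?case
      using elim(1) nz by (simp add: Ln_rcis dist_real_def abs_less_iff)
  qed
  have "((\<lambda>x. v x / v t) has_vector_derivative v' / v t) (at t)"
    using v by (auto intro!: derivative_eq_intros simp: divide_inverse)
  moreover have "(Ln has_field_derivative inverse (v t / v t)) (at (v t / v t))"
    using nz by (intro has_field_derivative_Ln) auto
  ultimately have "((\<lambda>x. Ln (v x / v t)) has_vector_derivative v' / v t) (at t)"
    using field_vector_diff_chain_at nz by (fastforce simp: o_def)
  then have "((\<lambda>x. \<theta> t + Im (Ln (v x / v t))) has_real_derivative Im (v' / v t)) (at t)"
    by (auto intro!: derivative_eq_intros)
  moreover have "Im (v' / v t) = cross (v t) v' / (norm (v t))\<^sup>2"
    unfolding cross_def by (simp add: Im_divide cmod_power2)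
  ultimately show ?thesis
    using DERIV_cong_ev[OF refl local_angle refl] by simp
qed

lemma rotation_numberE:
  assumes arc: "smooth_regular_arc f" and rot: "rotation_number f r"
  obtains \<theta> where "continuous_on {0..1} \<theta>"
    "\<forall>t\<in>{0..1}. vd f t = of_real (norm (vd f t)) * cis (\<theta> t)"
    "\<theta> 1 - \<theta> 0 = 2 * pi * r"
    "\<forall>t\<in>{0<..<1}. (\<theta> has_real_derivative curvature f t * norm (vd f t)) (at t)"
proof -
  obtain S where S: "{0..1} \<subseteq> S"
    "\<And>x. x \<in> S \<Longrightarrow> (vd f has_vector_derivative vd (vd f) x) (at x)"
    "\<And>t. t \<in> {0..1} \<Longrightarrow> vd f t \<noteq> 0"
    using smooth_regular_arcE[OF arc] by metis
  obtain \<theta> where \<theta>: "continuous_on {0..1} \<theta>"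
    "\<forall>t\<in>{0..1}. vd f t = of_real (norm (vd f t)) * cis (\<theta> t)" "r = (\<theta> 1 - \<theta> 0) / (2 * pi)"
    using rot unfolding rotation_number_def by blast
  have "(\<theta> has_real_derivative curvature f t * norm (vd f t)) (at t)" if t: "t \<in> {0<..<1}" for t
  proof -
    have "\<forall>\<^sub>F x in nhds t. x \<in> {0<..<1}"
      using t by (intro eventually_nhds_in_open) auto
    then have "\<forall>\<^sub>F x in nhds t. vd f x = of_real (norm (vd f x)) * cis (\<theta> x)"
      by eventually_elim (use \<theta>(2) in auto)
    moreover have "isCont \<theta> t"
      using continuous_on_interior[OF \<theta>(1)] t by simp
    moreover have "t \<in> S"
      using S(1) t by auto
    ultimately have "(\<theta> has_real_derivative cross (vd f t) (vd (vd f) t) / (norm (vd f t))\<^sup>2) (at t)"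
      using t S(2,3) by (intro has_real_derivative_continuous_angle) auto
    then show ?thesis
      using t S(3)[of t] by (simp add: cross_vd_vd_eq_curvature power2_eq_square power3_eq_cube)
  qed
  then show ?thesis
    using that \<theta> by simp
qed

section \<open>Arcs parametrised by their tangent angle\<close>

text \<open>\<open>turning_arc f \<omega> \<rho>\<close>: the arc \<open>f\<close> turns to the left with tangent angle \<open>\<omega>\<close> and radius
  of curvature \<open>\<rho>\<close>, i.e.\ its arc length element is \<open>\<rho> d\<omega>\<close>.\<close>

definition turning_arc :: "(real \<Rightarrow> complex) \<Rightarrow> (real \<Rightarrow> real) \<Rightarrow> (real \<Rightarrow> real) \<Rightarrow> bool" where
  "turning_arc f \<omega> \<rho> \<longleftrightarrow>
     continuous_on {0..1} f \<and> continuous_on {0..1} \<omega> \<and> continuous_on {0..1} \<rho> \<and>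
     (\<forall>t\<in>{0..1}. 0 < \<rho> t) \<and>
     (\<forall>t\<in>{0<..<1}. \<exists>w>0. (\<omega> has_real_derivative w) (at t) \<and>
        (f has_vector_derivative of_real (\<rho> t * w) * cis (\<omega> t)) (at t))"

lemma turning_arcD:
  assumes "turning_arc f \<omega> \<rho>"
  shows "continuous_on {0..1} f" "continuous_on {0..1} \<omega>" "continuous_on {0..1} \<rho>"
    "\<And>t. t \<in> {0..1} \<Longrightarrow> 0 < \<rho> t"
    "\<And>t. t \<in> {0<..<1} \<Longrightarrow> \<exists>w>0. (\<omega> has_real_derivative w) (at t) \<and>
        (f has_vector_derivative of_real (\<rho> t * w) * cis (\<omega> t)) (at t)"
  using assms unfolding turning_arc_def by simp_all

lemma smooth_regular_arc_turning:
  assumes arc: "smooth_regular_arc f" and rot: "rotation_number f r"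
    and pos: "\<forall>t\<in>{0..1}. 0 < curvature f t"
  obtains \<theta> where "turning_arc f \<theta> (\<lambda>t. 1 / curvature f t)" "\<theta> 1 - \<theta> 0 = 2 * pi * r"
    "\<forall>t\<in>{0..1}. vd f t = of_real (norm (vd f t)) * cis (\<theta> t)"
proof -
  obtain S where S: "{0..1} \<subseteq> S" "\<And>x. x \<in> S \<Longrightarrow> (f has_vector_derivative vd f x) (at x)"
    "\<And>t. t \<in> {0..1} \<Longrightarrow> vd f t \<noteq> 0"
    using smooth_regular_arcE[OF arc] by metis
  obtain \<theta> where \<theta>: "continuous_on {0..1} \<theta>"
    "\<forall>t\<in>{0..1}. vd f t = of_real (norm (vd f t)) * cis (\<theta> t)" "\<theta> 1 - \<theta> 0 = 2 * pi * r"
    "\<forall>t\<in>{0<..<1}. (\<theta> has_real_derivative curvature f t * norm (vd f t)) (at t)"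
    using rotation_numberE[OF arc rot] by blast
  have "\<exists>w>0. (\<theta> has_real_derivative w) (at t) \<and>
      (f has_vector_derivative of_real (1 / curvature f t * w) * cis (\<theta> t)) (at t)"
    if t: "t \<in> {0<..<1}" for t
  proof (intro exI conjI)
    show "0 < curvature f t * norm (vd f t)"
      using pos S(3)[of t] t by simp
    show "(\<theta> has_real_derivative curvature f t * norm (vd f t)) (at t)"
      using \<theta>(4) t by blast
    have "0 < curvature f t"
      using pos t by simp
    then have "vd f t = of_real (1 / curvature f t * (curvature f t * norm (vd f t))) * cis (\<theta> t)"
      using \<theta>(2) t by simp
    moreover have "t \<in> S"
      using S(1) t by auto
    ultimately show "(f has_vector_derivative
        of_real (1 / curvature f t * (curvature f t * norm (vd f t))) * cis (\<theta> t)) (at t)"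
      using S(2) by metis
  qed
  moreover have "continuous_on {0..1} (\<lambda>t. 1 / curvature f t)"
    using smooth_regular_arc_continuous(2)[OF arc] pos by (intro continuous_intros) auto
  ultimately have "turning_arc f \<theta> (\<lambda>t. 1 / curvature f t)"
    unfolding turning_arc_def using smooth_regular_arc_continuous(1)[OF arc] \<theta>(1) pos by simp
  then show ?thesis
    using that \<theta> by blast
qed

lemma continuous_on_reflect_unit:
  "continuous_on {0..1} f \<Longrightarrow> continuous_on {0..1} (\<lambda>t::real. f (1 - t))"
  by (rule continuous_on_compose2[where g = f]) (auto intro!: continuous_intros)

lemma has_vector_derivative_reflect_unit:
  assumes "(f has_vector_derivative f') (at (1 - t))"
  shows "((\<lambda>t::real. f (1 - t)) has_vector_derivative - f') (at t)"
proof -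
  have "((\<lambda>t. 1 - t) has_vector_derivative - 1) (at t)"
    unfolding has_real_derivative_iff_has_vector_derivative[symmetric]
    by (auto intro!: derivative_eq_intros)
  then have "((f \<circ> (\<lambda>t. 1 - t)) has_vector_derivative (- 1) *\<^sub>R f') (at t)"
    using assms by (intro vector_diff_chain_at)
  then show ?thesis
    by (simp add: o_def)
qed

text \<open>The tangent angle of the reversed arc is that of \<open>f\<close> turned by \<open>\<pi>\<close>.\<close>

lemma smooth_regular_arc_reversed_turning:
  assumes arc: "smooth_regular_arc f" and rot: "rotation_number f r"
    and neg: "\<forall>t\<in>{0..1}. curvature f t < 0"
  obtains \<omega> where "turning_arc (\<lambda>t. f (1 - t)) \<omega> (\<lambda>t. - 1 / curvature f (1 - t))"
    "\<omega> 1 - \<omega> 0 = - 2 * pi * r"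
    "\<forall>t\<in>{0..1}. vd f (1 - t) = - of_real (norm (vd f (1 - t))) * cis (\<omega> t)"
proof -
  obtain S where S: "{0..1} \<subseteq> S" "\<And>x. x \<in> S \<Longrightarrow> (f has_vector_derivative vd f x) (at x)"
    "\<And>t. t \<in> {0..1} \<Longrightarrow> vd f t \<noteq> 0"
    using smooth_regular_arcE[OF arc] by metis
  obtain \<theta> where \<theta>: "continuous_on {0..1} \<theta>"
    "\<forall>t\<in>{0..1}. vd f t = of_real (norm (vd f t)) * cis (\<theta> t)" "\<theta> 1 - \<theta> 0 = 2 * pi * r"
    "\<forall>t\<in>{0<..<1}. (\<theta> has_real_derivative curvature f t * norm (vd f t)) (at t)"
    using rotation_numberE[OF arc rot] by blast
  have neg_flip: "curvature f (1 - t) < 0" if "t \<in> {0..1}" for t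
    using neg that by auto
  define \<omega> where "\<omega> t = \<theta> (1 - t) + pi" for t
  have cis_\<omega>: "cis (\<omega> t) = - cis (\<theta> (1 - t))" for t
    unfolding \<omega>_def by (simp add: cis_mult[symmetric])
  have "\<exists>w>0. (\<omega> has_real_derivative w) (at t) \<and>
      ((\<lambda>t. f (1 - t)) has_vector_derivative
         of_real (- 1 / curvature f (1 - t) * w) * cis (\<omega> t)) (at t)"
    if t: "t \<in> {0<..<1}" for t
  proof (intro exI conjI)
    show "0 < - (curvature f (1 - t) * norm (vd f (1 - t)))"
      using neg S(3)[of "1 - t"] t by (simp add: mult_neg_pos)
    show "(\<omega> has_real_derivative - (curvature f (1 - t) * norm (vd f (1 - t)))) (at t)"
      unfolding \<omega>_def using \<theta>(4) t
      by (auto intro!: derivative_eq_intros DERIV_chain2[where f = \<theta>])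
    have "1 - t \<in> S"
      using S(1) t by auto
    then have "((\<lambda>t. f (1 - t)) has_vector_derivative - vd f (1 - t)) (at t)"
      by (intro has_vector_derivative_reflect_unit S(2))
    then show "((\<lambda>t. f (1 - t)) has_vector_derivative of_real (- 1 / curvature f (1 - t) *
        - (curvature f (1 - t) * norm (vd f (1 - t)))) * cis (\<omega> t)) (at t)"
      using \<theta>(2) neg[rule_format, of "1 - t"] t by (simp add: cis_\<omega>)
  qed
  moreover have "continuous_on {0..1} (\<lambda>t. - 1 / curvature f (1 - t))"
    using continuous_on_reflect_unit[OF smooth_regular_arc_continuous(2)[OF arc]] neg_flip
    by (intro continuous_intros) (auto simp: less_imp_neq)
  moreover have "continuous_on {0..1} \<omega>"
    unfolding \<omega>_def using continuous_on_reflect_unit[OF \<theta>(1)] by (intro continuous_intros)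
  moreover have "continuous_on {0..1} (\<lambda>t. f (1 - t))"
    using continuous_on_reflect_unit[OF smooth_regular_arc_continuous(1)[OF arc]] .
  ultimately have "turning_arc (\<lambda>t. f (1 - t)) \<omega> (\<lambda>t. - 1 / curvature f (1 - t))"
    unfolding turning_arc_def using neg_flip by (simp add: divide_neg_neg)
  moreover have "\<omega> 1 - \<omega> 0 = - 2 * pi * r"
    using \<theta>(3) unfolding \<omega>_def by simp
  moreover have "\<forall>t\<in>{0..1}. vd f (1 - t) = - of_real (norm (vd f (1 - t))) * cis (\<omega> t)"
    using \<theta>(2) by (simp add: cis_\<omega>)
  ultimately show ?thesis
    using that by blast
qed

lemma turning_arc_strict_mono:
  assumes arc: "turning_arc f \<omega> \<rho>"
  shows "strict_mono_on {0..1} \<omega>"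
proof (rule strict_mono_onI)
  fix x y :: real
  assume xy: "x \<in> {0..1}" "y \<in> {0..1}" "x < y"
  have "continuous_on {x..y} \<omega>"
    using xy by (intro continuous_on_subset[OF turning_arcD(2)[OF arc]]) auto
  moreover have "\<exists>w. (\<omega> has_real_derivative w) (at z) \<and> 0 < w" if "x < z" "z < y" for z
    using turning_arcD(5)[OF arc, of z] xy that by fastforce
  ultimately show "\<omega> x < \<omega> y"
    using DERIV_pos_imp_increasing_open[OF xy(3)] by blast
qed

lemma turning_arc_angle_less: "turning_arc f \<omega> \<rho> \<Longrightarrow> \<omega> 0 < \<omega> 1"
  using strict_mono_onD[OF turning_arc_strict_mono, of f \<omega> \<rho> 0 1] by simp

lemma turning_arc_shift:
  assumes arc: "turning_arc f \<omega> \<rho>" and "cis c = 1"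
  shows "turning_arc f (\<lambda>t. \<omega> t - c) \<rho>"
proof -
  have cis_shift: "cis (\<omega> t - c) = cis (\<omega> t)" for t
    using cis_divide[of "\<omega> t" c] assms(2) by simp
  have "\<exists>w>0. ((\<lambda>t. \<omega> t - c) has_real_derivative w) (at t) \<and>
      (f has_vector_derivative of_real (\<rho> t * w) * cis (\<omega> t - c)) (at t)"
    if t: "t \<in> {0<..<1}" for t
  proof -
    obtain w where "0 < w" "(\<omega> has_real_derivative w) (at t)"
      "(f has_vector_derivative of_real (\<rho> t * w) * cis (\<omega> t)) (at t)"
      using turning_arcD(5)[OF arc t] by blast
    moreover have "((\<lambda>t. \<omega> t - c) has_real_derivative w) (at t)"
      using \<open>(\<omega> has_real_derivative w) (at t)\<close> by (auto intro!: derivative_eq_intros)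
    ultimately show ?thesis
      unfolding cis_shift by blast
  qed
  moreover have "continuous_on {0..1} (\<lambda>t. \<omega> t - c)"
    using turning_arcD(2)[OF arc] by (intro continuous_on_diff continuous_on_const)
  ultimately show ?thesis
    unfolding turning_arc_def using turning_arcD(1,3,4)[OF arc] by simp
qed

lemma strict_mono_continuous_inverseE:
  fixes \<omega> :: "real \<Rightarrow> real"
  assumes cont: "continuous_on {a..b} \<omega>" and mono: "strict_mono_on {a..b} \<omega>" and "a \<le> b"
  obtains g where "\<forall>t\<in>{a..b}. g (\<omega> t) = t" "\<forall>y\<in>{\<omega> a..\<omega> b}. g y \<in> {a..b} \<and> \<omega> (g y) = y"
    "continuous_on {\<omega> a..\<omega> b} g"
proof -
  define g where "g = inv_into {a..b} \<omega>"
  have g_\<omega>: "\<forall>t\<in>{a..b}. g (\<omega> t) = t"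
    unfolding g_def using strict_mono_on_imp_inj_on[OF mono] by simp
  have image: "\<omega> ` {a..b} = {\<omega> a..\<omega> b}"
  proof
    show "\<omega> ` {a..b} \<subseteq> {\<omega> a..\<omega> b}"
      using strict_mono_on_leD[OF mono] by auto
    show "{\<omega> a..\<omega> b} \<subseteq> \<omega> ` {a..b}"
      using IVT'[of \<omega> a _ b] cont \<open>a \<le> b\<close> by fastforce
  qed
  have "\<forall>y\<in>{\<omega> a..\<omega> b}. g y \<in> {a..b} \<and> \<omega> (g y) = y"
    using g_\<omega> unfolding image[symmetric] by auto
  moreover have "continuous_on {\<omega> a..\<omega> b} g"
    unfolding image[symmetric] using continuous_on_inv[OF cont compact_Icc] g_\<omega> by blast
  ultimately show ?thesis
    using that g_\<omega> by blast
qed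

lemma turning_arc_reparametrisation:
  assumes arc: "turning_arc f \<omega> \<rho>"
  obtains g where "\<forall>y\<in>{\<omega> 0..\<omega> 1}. g y \<in> {0..1} \<and> \<omega> (g y) = y" "g (\<omega> 0) = 0" "g (\<omega> 1) = 1"
    "continuous_on {\<omega> 0..\<omega> 1} (f \<circ> g)" "continuous_on {\<omega> 0..\<omega> 1} (\<rho> \<circ> g)"
    "\<forall>y\<in>{\<omega> 0<..<\<omega> 1}. ((f \<circ> g) has_vector_derivative of_real (\<rho> (g y)) * cis y) (at y)"
proof -
  obtain g where g_\<omega>: "\<forall>t\<in>{0..1}. g (\<omega> t) = t"
    and \<omega>_g: "\<forall>y\<in>{\<omega> 0..\<omega> 1}. g y \<in> {0..1} \<and> \<omega> (g y) = y"
    and g_cont: "continuous_on {\<omega> 0..\<omega> 1} g"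
    using strict_mono_continuous_inverseE[OF turning_arcD(2)[OF arc] turning_arc_strict_mono[OF arc]]
    by auto
  have "g ` {\<omega> 0..\<omega> 1} \<subseteq> {0..1}"
    using \<omega>_g by auto
  then have "continuous_on {\<omega> 0..\<omega> 1} (f \<circ> g)" "continuous_on {\<omega> 0..\<omega> 1} (\<rho> \<circ> g)"
    using continuous_on_compose[OF g_cont] continuous_on_subset turning_arcD(1,3)[OF arc] by blast+
  moreover have "((f \<circ> g) has_vector_derivative of_real (\<rho> (g y)) * cis y) (at y)"
    if y: "y \<in> {\<omega> 0<..<\<omega> 1}" for y
  proof -
    have "g y \<in> {0..1}" "\<omega> (g y) = y"
      using \<omega>_g y by auto
    then have gy: "g y \<in> {0<..<1}"
      using y by (auto simp: less_le)
    then obtain w where w: "0 < w" "(\<omega> has_real_derivative w) (at (g y))"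
      "(f has_vector_derivative of_real (\<rho> (g y) * w) * cis (\<omega> (g y))) (at (g y))"
      using turning_arcD(5)[OF arc gy] by blast
    have "(g has_real_derivative inverse w) (at y)"
      using w(1,2) y \<omega>_g continuous_on_interior[OF g_cont, of y]
      by (intro DERIV_inverse_function[where a = "\<omega> 0" and b = "\<omega> 1"]) auto
    then have "((f \<circ> g) has_vector_derivative inverse w *\<^sub>R (of_real (\<rho> (g y) * w) * cis (\<omega> (g y)))) (at y)"
      using w(3) by (intro vector_diff_chain_at) (simp_all add: has_real_derivative_iff_has_vector_derivative)
    moreover have "inverse w *\<^sub>R (of_real (\<rho> (g y) * w) * cis (\<omega> (g y))) = of_real (\<rho> (g y)) * cis y"
      using w(1) \<open>\<omega> (g y) = y\<close> by (simp add: scaleR_conv_of_real field_simps)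
    ultimately show ?thesis
      by simp
  qed
  ultimately show ?thesis
    using that[of g] \<omega>_g g_\<omega> by simp
qed

lemma chord_in_open_sector:
  fixes F :: "real \<Rightarrow> complex"
  assumes "\<alpha> < \<beta>" "\<beta> - \<alpha> < pi" and cont: "continuous_on {\<alpha>..\<beta>} F"
    and deriv: "\<And>y. y \<in> {\<alpha><..<\<beta>} \<Longrightarrow> (F has_vector_derivative of_real (k y) * cis y) (at y)"
    and pos: "\<And>y. y \<in> {\<alpha><..<\<beta>} \<Longrightarrow> 0 < k y"
  shows "F \<beta> - F \<alpha> \<in> open_sector (cis \<alpha>) (cis \<beta>)"
proof -
  have deriv_cross: "((\<lambda>x. cross (cis \<gamma>) (F x)) has_real_derivative k y * sin (y - \<gamma>)) (at y)"
    if "y \<in> {\<alpha><..<\<beta>}" for \<gamma> y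
  proof -
    have "((\<lambda>x. Im (cnj (cis \<gamma>) * F x)) has_real_derivative
        Im (cnj (cis \<gamma>) * (of_real (k y) * cis y))) (at y)"
      by (intro has_field_derivative_Im has_vector_derivative_mult_right deriv that)
    then show ?thesis
      unfolding cross_def by (simp add: sin_diff algebra_simps)
  qed
  have cont_cross: "continuous_on {\<alpha>..\<beta>} (\<lambda>x. cross (cis \<gamma>) (F x))" for \<gamma>
    unfolding cross_def by (intro continuous_intros cont)
  have "cross (cis \<alpha>) (F \<alpha>) < cross (cis \<alpha>) (F \<beta>)"
  proof (rule DERIV_pos_imp_increasing_open[OF assms(1) _ cont_cross])
    fix y assume y: "\<alpha> < y" "y < \<beta>"
    then have "0 < k y * sin (y - \<alpha>)"
      using pos assms(2) by (intro mult_pos_pos sin_gt_zero) auto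
    then show "\<exists>d. ((\<lambda>x. cross (cis \<alpha>) (F x)) has_real_derivative d) (at y) \<and> 0 < d"
      using deriv_cross y by auto
  qed
  moreover have "cross (cis \<beta>) (F \<beta>) < cross (cis \<beta>) (F \<alpha>)"
  proof (rule DERIV_neg_imp_decreasing_open[OF assms(1) _ cont_cross])
    fix y assume y: "\<alpha> < y" "y < \<beta>"
    then have "0 < k y * sin (\<beta> - y)"
      using pos assms(2) by (intro mult_pos_pos sin_gt_zero) auto
    then show "\<exists>d. ((\<lambda>x. cross (cis \<beta>) (F x)) has_real_derivative d) (at y) \<and> d < 0"
      using deriv_cross[of y \<beta>] y by (auto simp: sin_diff algebra_simps)
  qed
  ultimately show ?thesis
    unfolding open_sector_def cross_def by (simp add: algebra_simps)
qed

lemma turning_arc_chord_in_open_sector: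
  assumes arc: "turning_arc f \<omega> \<rho>" and narrow: "\<omega> 1 - \<omega> 0 < pi"
  shows "f 1 - f 0 \<in> open_sector (cis (\<omega> 0)) (cis (\<omega> 1))"
proof -
  obtain g where g: "\<forall>y\<in>{\<omega> 0..\<omega> 1}. g y \<in> {0..1} \<and> \<omega> (g y) = y" "g (\<omega> 0) = 0" "g (\<omega> 1) = 1"
    "continuous_on {\<omega> 0..\<omega> 1} (f \<circ> g)" "continuous_on {\<omega> 0..\<omega> 1} (\<rho> \<circ> g)"
    "\<forall>y\<in>{\<omega> 0<..<\<omega> 1}. ((f \<circ> g) has_vector_derivative of_real (\<rho> (g y)) * cis y) (at y)"
    by (rule turning_arc_reparametrisation[OF arc])
  have "\<omega> 0 < \<omega> 1"
    by (rule turning_arc_angle_less[OF arc])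
  moreover have "0 < \<rho> (g y)" if "y \<in> {\<omega> 0<..<\<omega> 1}" for y
  proof -
    have "g y \<in> {0..1}"
      using g(1) that by auto
    then show ?thesis
      by (rule turning_arcD(4)[OF arc])
  qed
  ultimately have "(f \<circ> g) (\<omega> 1) - (f \<circ> g) (\<omega> 0) \<in> open_sector (cis (\<omega> 0)) (cis (\<omega> 1))"
    using g(6) by (intro chord_in_open_sector[OF _ narrow g(4)]) auto
  then show ?thesis
    using g(2,3) by simp
qed

lemma continuous_on_nonzero_sign:
  fixes h :: "real \<Rightarrow> real"
  assumes cont: "continuous_on {a..b} h" and nz: "\<And>y. y \<in> {a<..<b} \<Longrightarrow> h y \<noteq> 0"
  shows "(\<forall>y\<in>{a<..<b}. 0 < h y) \<or> (\<forall>y\<in>{a<..<b}. h y < 0)"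
proof (rule ccontr)
  assume "\<not> ?thesis"
  then obtain x z where x: "x \<in> {a<..<b}" "h x < 0" and z: "z \<in> {a<..<b}" "0 < h z"
    using nz by (meson linorder_neqE_linordered_idom)
  have sub: "continuous_on {min x z..max x z} h"
    by (rule continuous_on_subset[OF cont]) (use x z in \<open>auto simp: min_def max_def\<close>)
  obtain w where "min x z \<le> w" "w \<le> max x z" "h w = 0"
  proof (cases "x \<le> z")
    case True
    then show ?thesis
      using IVT'[of h x 0 z] sub x z that by auto
  next
    case False
    then show ?thesis
      using IVT2'[of h x 0 z] sub x z that by auto
  qed
  then have "w \<in> {a<..<b}"
    using x z by auto
  then show False
    using nz \<open>h w = 0\<close> by blast
qed

lemma chord_difference_in_open_sector:
  fixes F G :: "real \<Rightarrow> complex"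
  assumes ab: "\<alpha> < \<beta>" "\<beta> - \<alpha> < pi"
    and cont: "continuous_on {\<alpha>..\<beta>} F" "continuous_on {\<alpha>..\<beta>} G"
    and F_deriv: "\<And>y. y \<in> {\<alpha><..<\<beta>} \<Longrightarrow> (F has_vector_derivative of_real (k y) * cis y) (at y)"
    and G_deriv: "\<And>y. y \<in> {\<alpha><..<\<beta>} \<Longrightarrow> (G has_vector_derivative of_real (l y) * cis y) (at y)"
    and speeds: "continuous_on {\<alpha>..\<beta>} (\<lambda>y. k y - l y)" "\<And>y. y \<in> {\<alpha><..<\<beta>} \<Longrightarrow> k y \<noteq> l y"
  shows "(F \<beta> - F \<alpha>) - (G \<beta> - G \<alpha>) \<in> open_sector (cis \<alpha>) (cis \<beta>) \<or>
    (G \<beta> - G \<alpha>) - (F \<beta> - F \<alpha>) \<in> open_sector (cis \<alpha>) (cis \<beta>)"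
proof -
  have "(\<forall>y\<in>{\<alpha><..<\<beta>}. 0 < k y - l y) \<or> (\<forall>y\<in>{\<alpha><..<\<beta>}. k y - l y < 0)"
    using speeds by (intro continuous_on_nonzero_sign) auto
  then show ?thesis
  proof
    assume "\<forall>y\<in>{\<alpha><..<\<beta>}. 0 < k y - l y"
    then have "(\<lambda>y. F y - G y) \<beta> - (\<lambda>y. F y - G y) \<alpha> \<in> open_sector (cis \<alpha>) (cis \<beta>)"
      using ab cont F_deriv G_deriv
      by (intro chord_in_open_sector[where k = "\<lambda>y. k y - l y"])
        (auto intro!: continuous_intros derivative_eq_intros simp: algebra_simps)
    then show ?thesis
      by (simp add: algebra_simps)
  next
    assume "\<forall>y\<in>{\<alpha><..<\<beta>}. k y - l y < 0"
    then have "(\<lambda>y. G y - F y) \<beta> - (\<lambda>y. G y - F y) \<alpha> \<in> open_sector (cis \<alpha>) (cis \<beta>)"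
      using ab cont F_deriv G_deriv
      by (intro chord_in_open_sector[where k = "\<lambda>y. l y - k y"])
        (auto intro!: continuous_intros derivative_eq_intros simp: algebra_simps)
    then show ?thesis
      by (simp add: algebra_simps)
  qed
qed

lemma turning_arcs_chord_difference_in_open_sector:
  assumes arc1: "turning_arc f1 \<omega>1 \<rho>1" and arc2: "turning_arc f2 \<omega>2 \<rho>2"
    and ends: "\<omega>2 0 = \<omega>1 0" "\<omega>2 1 = \<omega>1 1" and narrow: "\<omega>1 1 - \<omega>1 0 < pi"
    and radii: "\<forall>t\<in>{0..1}. \<forall>s\<in>{0..1}. \<omega>1 t = \<omega>2 s \<longrightarrow> \<rho>1 t \<noteq> \<rho>2 s"
  shows "(f1 1 - f1 0) - (f2 1 - f2 0) \<in> open_sector (cis (\<omega>1 0)) (cis (\<omega>1 1)) \<or>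
    (f2 1 - f2 0) - (f1 1 - f1 0) \<in> open_sector (cis (\<omega>1 0)) (cis (\<omega>1 1))"
proof -
  obtain g1 where g1: "\<forall>y\<in>{\<omega>1 0..\<omega>1 1}. g1 y \<in> {0..1} \<and> \<omega>1 (g1 y) = y"
    "g1 (\<omega>1 0) = 0" "g1 (\<omega>1 1) = 1"
    "continuous_on {\<omega>1 0..\<omega>1 1} (f1 \<circ> g1)" "continuous_on {\<omega>1 0..\<omega>1 1} (\<rho>1 \<circ> g1)"
    "\<forall>y\<in>{\<omega>1 0<..<\<omega>1 1}. ((f1 \<circ> g1) has_vector_derivative of_real (\<rho>1 (g1 y)) * cis y) (at y)"
    by (rule turning_arc_reparametrisation[OF arc1])
  obtain g2 where g2: "\<forall>y\<in>{\<omega>1 0..\<omega>1 1}. g2 y \<in> {0..1} \<and> \<omega>2 (g2 y) = y"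
    "g2 (\<omega>1 0) = 0" "g2 (\<omega>1 1) = 1"
    "continuous_on {\<omega>1 0..\<omega>1 1} (f2 \<circ> g2)" "continuous_on {\<omega>1 0..\<omega>1 1} (\<rho>2 \<circ> g2)"
    "\<forall>y\<in>{\<omega>1 0<..<\<omega>1 1}. ((f2 \<circ> g2) has_vector_derivative of_real (\<rho>2 (g2 y)) * cis y) (at y)"
    using turning_arc_reparametrisation[OF arc2] unfolding ends by blast
  have "continuous_on {\<omega>1 0..\<omega>1 1} (\<lambda>y. \<rho>1 (g1 y) - \<rho>2 (g2 y))"
    using g1(5) g2(5) by (intro continuous_intros) (simp_all add: o_def)
  moreover have "\<rho>1 (g1 y) \<noteq> \<rho>2 (g2 y)" if "y \<in> {\<omega>1 0<..<\<omega>1 1}" for y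
    using radii g1(1) g2(1) that by fastforce
  ultimately have "((f1 \<circ> g1) (\<omega>1 1) - (f1 \<circ> g1) (\<omega>1 0)) - ((f2 \<circ> g2) (\<omega>1 1) - (f2 \<circ> g2) (\<omega>1 0))
      \<in> open_sector (cis (\<omega>1 0)) (cis (\<omega>1 1)) \<or>
    ((f2 \<circ> g2) (\<omega>1 1) - (f2 \<circ> g2) (\<omega>1 0)) - ((f1 \<circ> g1) (\<omega>1 1) - (f1 \<circ> g1) (\<omega>1 0))
      \<in> open_sector (cis (\<omega>1 0)) (cis (\<omega>1 1))"
    using turning_arc_angle_less[OF arc1] narrow g1(4,6) g2(4,6)
    by (intro chord_difference_in_open_sector[where k = "\<lambda>y. \<rho>1 (g1 y)" and l = "\<lambda>y. \<rho>2 (g2 y)"])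
      (auto simp: o_def)
  then show ?thesis
    using g1(2,3) g2(2,3) by simp
qed

section \<open>Parallel pairs\<close>

lemma strict_local_min_second_derivative:
  fixes \<phi> \<phi>' :: "real \<Rightarrow> real"
  assumes S: "open S" "t \<in> S" and deriv: "\<And>x. x \<in> S \<Longrightarrow> (\<phi> has_real_derivative \<phi>' x) (at x)"
    and deriv2: "(\<phi>' has_real_derivative c) (at t)" and "0 < c" and crit: "\<phi>' t = 0"
  shows "\<exists>e>0. \<forall>x. 0 < \<bar>x - t\<bar> \<and> \<bar>x - t\<bar> < e \<longrightarrow> \<phi> t < \<phi> x"
proof -
  obtain d1 where d1: "0 < d1" "\<And>h. 0 < h \<Longrightarrow> h < d1 \<Longrightarrow> \<phi>' t < \<phi>' (t + h)"
    using DERIV_pos_inc_right[OF deriv2 \<open>0 < c\<close>] by blast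
  obtain d2 where d2: "0 < d2" "\<And>h. 0 < h \<Longrightarrow> h < d2 \<Longrightarrow> \<phi>' (t - h) < \<phi>' t"
    using DERIV_pos_inc_left[OF deriv2 \<open>0 < c\<close>] by blast
  obtain r where r: "0 < r" "ball t r \<subseteq> S"
    using S openE by blast
  define e where "e = min r (min d1 d2)"
  have "\<phi> t < \<phi> x" if x: "0 < \<bar>x - t\<bar>" "\<bar>x - t\<bar> < e" for x
  proof -
    show ?thesis
    proof (cases "t < x")
      case True
      then obtain z where z: "t < z" "z < x" "\<phi> x - \<phi> t = (x - t) * \<phi>' z"
        using MVT2[of t x \<phi> \<phi>'] deriv r x by (fastforce simp: e_def dist_real_def subset_iff)
      have "0 < \<phi>' (t + (z - t))"
        using d1(2)[of "z - t"] z x crit by (auto simp: e_def)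
      then have "0 < (x - t) * \<phi>' z"
        using True by simp
      then show ?thesis
        using z by linarith
    next
      case False
      then have "x < t"
        using x by auto
      then obtain z where z: "x < z" "z < t" "\<phi> t - \<phi> x = (t - x) * \<phi>' z"
        using MVT2[of x t \<phi> \<phi>'] deriv r x by (fastforce simp: e_def dist_real_def subset_iff)
      have "\<phi>' (t - (t - z)) < 0"
        using d2(2)[of "t - z"] z x crit by (auto simp: e_def)
      then have "(t - x) * \<phi>' z < 0"
        using \<open>x < t\<close> by (simp add: mult_pos_neg)
      then show ?thesis
        using z by linarith
    qed
  qed
  moreover have "0 < e"
    using r d1 d2 by (simp add: e_def)
  ultimately show ?thesis
    by blast
qed

lemma curve_locally_on_side:
  fixes f f' :: "real \<Rightarrow> complex"
  assumes S: "open S" "t \<in> S" and deriv: "\<And>x. x \<in> S \<Longrightarrow> (f has_vector_derivative f' x) (at x)"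
    and deriv2: "(f' has_vector_derivative f'') (at t)"
    and "cross w (f' t) = 0" "0 < cross w f''"
  shows "\<exists>e>0. \<forall>x. 0 < \<bar>x - t\<bar> \<and> \<bar>x - t\<bar> < e \<longrightarrow> 0 < cross w (f x - f t)"
proof -
  have "\<exists>e>0. \<forall>x. 0 < \<bar>x - t\<bar> \<and> \<bar>x - t\<bar> < e \<longrightarrow> cross w (f t) < cross w (f x)"
  proof (rule strict_local_min_second_derivative[OF S])
    show "((\<lambda>x. cross w (f x)) has_real_derivative cross w (f' x)) (at x)" if "x \<in> S" for x
      unfolding cross_def by (intro has_field_derivative_Im has_vector_derivative_mult_right deriv that)
    show "((\<lambda>x. cross w (f' x)) has_real_derivative cross w f'') (at t)"
      unfolding cross_def by (intro has_field_derivative_Im has_vector_derivative_mult_right deriv2)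
  qed (use assms in auto)
  then show ?thesis
    by (simp add: cross_diff)
qed

lemma unit_interval_nearby_pointE:
  fixes t e :: real
  assumes "t \<in> {0..1}" "0 < e"
  obtains x where "x \<in> {0..1}" "0 < \<bar>x - t\<bar>" "\<bar>x - t\<bar> < e"
proof (cases "t \<le> 1/2")
  case True
  then show ?thesis
    using that[of "t + min e 1 / 2"] assms by (auto simp: min_def)
next
  case False
  then show ?thesis
    using that[of "t - min e 1 / 2"] assms by (auto simp: min_def)
qed

lemma smooth_regular_arc_locally_on_side:
  assumes arc: "smooth_regular_arc f" and t: "t \<in> {0..1}"
    and "cross w (vd f t) = 0" "0 < cross w (vd (vd f) t)"
  obtains e where "0 < e" "\<And>x. 0 < \<bar>x - t\<bar> \<Longrightarrow> \<bar>x - t\<bar> < e \<Longrightarrow> 0 < cross w (f x - f t)"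
proof -
  obtain S where S: "open S" "{0..1} \<subseteq> S" "\<And>x. x \<in> S \<Longrightarrow> (f has_vector_derivative vd f x) (at x)"
    "\<And>x. x \<in> S \<Longrightarrow> (vd f has_vector_derivative vd (vd f) x) (at x)"
    using smooth_regular_arcE[OF arc] by metis
  have "\<exists>e>0. \<forall>x. 0 < \<bar>x - t\<bar> \<and> \<bar>x - t\<bar> < e \<longrightarrow> 0 < cross w (f x - f t)"
    by (rule curve_locally_on_side[OF S(1) _ S(3) S(4)]) (use assms S(2) in auto)
  then show ?thesis
    using that by blast
qed

text \<open>With equally oriented tangents, positive and negative curvature would put the two germs on
  opposite sides of the tangent line.\<close>

lemma curved_same_side_opposite_tangents:
  assumes f: "smooth_regular_arc f" and g: "smooth_regular_arc g"
    and t: "t \<in> {0..1}" and s: "s \<in> {0..1}"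
    and f_pos: "0 < curvature f t" and g_neg: "curvature g s < 0"
    and par: "cross (vd f t) (vd g s) = 0" and same: "curved_same_side f t g s"
  shows "dotp (vd f t) (vd g s) < 0"
proof (rule ccontr)
  assume "\<not> dotp (vd f t) (vd g s) < 0"
  have f_nz: "vd f t \<noteq> 0" and g_nz: "vd g s \<noteq> 0"
    using smooth_regular_arc_vd_nonzero f g t s by auto
  then obtain c where "0 < c" and f_g: "vd f t = of_real c * vd g s"
    using same_direction_if_cross_eq_0_dotp_nonneg[OF par] \<open>\<not> dotp (vd f t) (vd g s) < 0\<close>
    by (metis not_less)
  have "0 < cross (vd f t) (vd (vd f) t)"
    using f_pos f_nz by (simp add: cross_vd_vd_eq_curvature)
  with cross_self obtain e1 where e1: "0 < e1"
    "\<And>x. 0 < \<bar>x - t\<bar> \<Longrightarrow> \<bar>x - t\<bar> < e1 \<Longrightarrow> 0 < cross (vd f t) (f x - f t)"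
    by (metis smooth_regular_arc_locally_on_side[OF f t])
  have "curvature g s * norm (vd g s) ^ 3 < 0"
    using g_neg g_nz by (simp add: mult_neg_pos)
  then have "0 < cross (- vd f t) (vd (vd g) s)"
    using f_g \<open>0 < c\<close> g_nz by (simp add: cross_vd_vd_eq_curvature mult_pos_neg)
  moreover have "cross (- vd f t) (vd g s) = 0"
    using f_g by simp
  ultimately obtain e2 where e2: "0 < e2"
    "\<And>x. 0 < \<bar>x - s\<bar> \<Longrightarrow> \<bar>x - s\<bar> < e2 \<Longrightarrow> 0 < cross (- vd f t) (g x - g s)"
    by (metis smooth_regular_arc_locally_on_side[OF g s])
  obtain e where e: "0 < e" "\<forall>t'\<in>{0..1}. \<forall>s'\<in>{0..1}.
      0 < \<bar>t' - t\<bar> \<and> \<bar>t' - t\<bar> < e \<and> 0 < \<bar>s' - s\<bar> \<and> \<bar>s' - s\<bar> < e \<longrightarrow>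
      0 < cross (vd f t) (f t' - f t) * cross (vd f t) (transl (f t - g s) (g s') - f t)"
    using same unfolding curved_same_side_def by blast
  obtain t' where t': "t' \<in> {0..1}" "0 < \<bar>t' - t\<bar>" "\<bar>t' - t\<bar> < min e e1"
    using unit_interval_nearby_pointE[OF t, of "min e e1"] e(1) e1(1) by auto
  obtain s' where s': "s' \<in> {0..1}" "0 < \<bar>s' - s\<bar>" "\<bar>s' - s\<bar> < min e e2"
    using unit_interval_nearby_pointE[OF s, of "min e e2"] e(1) e2(1) by auto
  have "0 < cross (vd f t) (f t' - f t)"
    using e1(2) t' by auto
  moreover have "cross (vd f t) (transl (f t - g s) (g s') - f t) < 0"
    using e2(2) s' unfolding transl_def by (simp add: cross_diff)
  ultimately have "cross (vd f t) (f t' - f t) * cross (vd f t) (transl (f t - g s) (g s') - f t) < 0"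
    by (rule mult_pos_neg)
  then show False
    using e(2) t' s' by force
qed

lemma gives_asymptote_opposite_tangents:
  assumes "parallel_pair f t g s"
    and "vd f t = of_real a * cis y" "vd g s = - of_real b * cis y" "0 < a" "0 < b"
  shows "gives_asymptote f t g s \<longleftrightarrow> curvature f t + curvature g s = 0"
proof -
  have "vd f t / of_real (norm (vd f t)) = cis y" "vd g s / of_real (norm (vd g s)) = - cis y"
    using assms(2-5) by (simp_all add: norm_mult)
  moreover have "dotp (cis y) (- cis y) = -1"
    by (simp add: dotp_cis)
  ultimately show ?thesis
    using assms(1) unfolding gives_asymptote_def Let_def by simp
qed

lemma equal_rotation_widths:
  assumes "turning_arc f \<theta> \<rho>" "turning_arc g \<omega> \<sigma>"
    and "\<theta> 1 - \<theta> 0 = 2 * pi * r" "\<omega> 1 - \<omega> 0 = - 2 * pi * r'" "\<bar>r\<bar> = \<bar>r'\<bar>" "\<bar>r\<bar> < 1/2"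
  shows "\<omega> 1 - \<omega> 0 = \<theta> 1 - \<theta> 0" "\<theta> 1 - \<theta> 0 < pi"
proof -
  have "0 < 2 * pi * r" "0 < - (2 * pi * r')"
    using turning_arc_angle_less[OF assms(1)] turning_arc_angle_less[OF assms(2)] assms(3,4)
    by linarith+
  then have "0 < r" "r' = - r"
    using pi_gt_zero assms(5) by (auto simp: zero_less_mult_iff mult_less_0_iff)
  moreover have "pi * (2 * r) < pi * 1"
    using assms(6) \<open>0 < r\<close> pi_gt_zero by (intro mult_strict_left_mono) auto
  ultimately show "\<omega> 1 - \<omega> 0 = \<theta> 1 - \<theta> 0" "\<theta> 1 - \<theta> 0 < pi"
    using assms(3,4) by (simp_all add: mult.assoc)
qed

text \<open>The same-side condition excludes that the tangent angle of the reversed \<open>Q\<close> differs from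
  that of \<open>P\<close> by \<open>\<pi>\<close>.\<close>

lemma reversed_tangent_angle_aligned:
  assumes P_arc: "smooth_regular_arc P" and Q_arc: "smooth_regular_arc Q"
    and P_pos: "\<forall>t\<in>{0..1}. 0 < curvature P t" and Q_neg: "\<forall>s\<in>{0..1}. curvature Q s < 0"
    and P_polar: "vd P 0 = of_real (norm (vd P 0)) * cis \<theta>\<^sub>0"
    and Q_polar: "\<forall>t\<in>{0..1}. vd Q (1 - t) = - of_real (norm (vd Q (1 - t))) * cis (\<omega> t)"
    and \<omega>_mono: "strict_mono_on {0..1} \<omega>" and narrow: "\<omega> 1 - \<omega> 0 < pi"
    and ends_parallel: "cross (vd P 0) (vd Q 1) = 0"
    and pair: "parallel_pair P 0 Q s" and same: "curved_same_side P 0 Q s"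
  shows "cis (\<omega> 0) = cis \<theta>\<^sub>0"
proof -
  have s: "s \<in> {0..1}" and par: "cross (vd P 0) (vd Q s) = 0"
    using pair unfolding parallel_pair_def by auto
  have "dotp (vd P 0) (vd Q s) < 0"
    using curved_same_side_opposite_tangents[OF P_arc Q_arc _ s _ _ par same] P_pos Q_neg s by simp
  moreover have "vd Q s = - of_real (norm (vd Q s)) * cis (\<omega> (1 - s))"
    "vd Q 1 = - of_real (norm (vd Q 1)) * cis (\<omega> 0)"
    using Q_polar[rule_format, of "1 - s"] Q_polar[rule_format, of 0] s by auto
  ultimately have "dotp (of_real (norm (vd P 0)) * cis \<theta>\<^sub>0)
      (- of_real (norm (vd Q s)) * cis (\<omega> (1 - s))) < 0"
    "cross (of_real (norm (vd P 0)) * cis \<theta>\<^sub>0) (- of_real (norm (vd Q s)) * cis (\<omega> (1 - s))) = 0"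
    "cross (of_real (norm (vd P 0)) * cis \<theta>\<^sub>0) (- of_real (norm (vd Q 1)) * cis (\<omega> 0)) = 0"
    using par ends_parallel P_polar by metis+
  moreover have "vd P 0 \<noteq> 0" "vd Q s \<noteq> 0" "vd Q 1 \<noteq> 0"
    using smooth_regular_arc_vd_nonzero[OF P_arc] smooth_regular_arc_vd_nonzero[OF Q_arc] s by auto
  ultimately have "cross (cis \<theta>\<^sub>0) (cis (\<omega> (1 - s))) = 0" "0 < dotp (cis \<theta>\<^sub>0) (cis (\<omega> (1 - s)))"
    "cross (cis \<theta>\<^sub>0) (cis (\<omega> 0)) = 0"
    by (auto simp: zero_less_mult_iff mult_less_0_iff)
  then have "cis \<theta>\<^sub>0 = cis (\<omega> (1 - s))" "cross (cis (\<omega> (1 - s))) (cis (\<omega> 0)) = 0"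
    using cis_eq_if_cross_eq_0_dotp_pos by metis+
  moreover have "\<omega> (1 - s) \<in> {\<omega> 0..\<omega> 1}"
    using strict_mono_on_leD[OF \<omega>_mono] s by auto
  ultimately show ?thesis
    using cross_cis_eq_0_imp_eq[of "\<omega> (1 - s)" "\<omega> 0" "\<omega> 1" "\<omega> 0"] narrow by simp
qed

lemma common_tangent_angles:
  assumes P_arc: "smooth_regular_arc P" and Q_arc: "smooth_regular_arc Q"
    and P_pos: "\<forall>t\<in>{0..1}. 0 < curvature P t" and Q_neg: "\<forall>s\<in>{0..1}. curvature Q s < 0"
    and P_rot: "rotation_number P rP" and Q_rot: "rotation_number Q rQ"
    and rot: "\<bar>rP\<bar> = \<bar>rQ\<bar>" "\<bar>rP\<bar> < 1/2"
    and ends_parallel: "cross (vd P 0) (vd Q 1) = 0"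
    and pair: "parallel_pair P 0 Q s" and same: "curved_same_side P 0 Q s"
  obtains \<theta> \<omega> where "turning_arc P \<theta> (\<lambda>t. 1 / curvature P t)"
    "turning_arc (\<lambda>t. Q (1 - t)) \<omega> (\<lambda>t. - 1 / curvature Q (1 - t))"
    "\<forall>t\<in>{0..1}. vd P t = of_real (norm (vd P t)) * cis (\<theta> t)"
    "\<forall>t\<in>{0..1}. vd Q (1 - t) = - of_real (norm (vd Q (1 - t))) * cis (\<omega> t)"
    "\<omega> 0 = \<theta> 0" "\<omega> 1 = \<theta> 1" "\<theta> 1 - \<theta> 0 < pi"
proof -
  obtain \<theta> where P_turn: "turning_arc P \<theta> (\<lambda>t. 1 / curvature P t)"
    and P_width: "\<theta> 1 - \<theta> 0 = 2 * pi * rP"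
    and P_polar: "\<forall>t\<in>{0..1}. vd P t = of_real (norm (vd P t)) * cis (\<theta> t)"
    using smooth_regular_arc_turning[OF P_arc P_rot P_pos] by blast
  obtain \<omega> where Q_turn: "turning_arc (\<lambda>t. Q (1 - t)) \<omega> (\<lambda>t. - 1 / curvature Q (1 - t))"
    and Q_width: "\<omega> 1 - \<omega> 0 = - 2 * pi * rQ"
    and Q_polar: "\<forall>t\<in>{0..1}. vd Q (1 - t) = - of_real (norm (vd Q (1 - t))) * cis (\<omega> t)"
    using smooth_regular_arc_reversed_turning[OF Q_arc Q_rot Q_neg] by blast
  have width: "\<omega> 1 - \<omega> 0 = \<theta> 1 - \<theta> 0" "\<theta> 1 - \<theta> 0 < pi"
    using equal_rotation_widths[OF P_turn Q_turn P_width Q_width rot] by simp_all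
  have "cis (\<omega> 0) = cis (\<theta> 0)"
    using P_polar width turning_arc_strict_mono[OF Q_turn]
    by (intro reversed_tangent_angle_aligned[OF P_arc Q_arc P_pos Q_neg _ Q_polar _ _ ends_parallel
        pair same]) simp_all
  then have aligned: "cis (\<omega> 0 - \<theta> 0) = 1"
    by (simp add: cis_divide[symmetric])
  define \<omega>' where "\<omega>' t = \<omega> t - (\<omega> 0 - \<theta> 0)" for t
  have "turning_arc (\<lambda>t. Q (1 - t)) \<omega>' (\<lambda>t. - 1 / curvature Q (1 - t))"
    unfolding \<omega>'_def by (rule turning_arc_shift[OF Q_turn aligned])
  moreover have "cis (\<omega>' t) = cis (\<omega> t)" for t
    using cis_divide[of "\<omega> t" "\<omega> 0 - \<theta> 0"] aligned unfolding \<omega>'_def by simp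
  moreover have "\<omega>' 0 = \<theta> 0" "\<omega>' 1 = \<theta> 1"
    using width unfolding \<omega>'_def by simp_all
  ultimately show ?thesis
    using that[OF P_turn] P_polar Q_polar width by simp
qed

lemma parallel_pair_tangent_angles_eq:
  assumes P_arc: "smooth_regular_arc P" and Q_arc: "smooth_regular_arc Q"
    and P_polar: "\<forall>t\<in>{0..1}. vd P t = of_real (norm (vd P t)) * cis (\<theta> t)"
    and Q_polar: "\<forall>t\<in>{0..1}. vd Q (1 - t) = - of_real (norm (vd Q (1 - t))) * cis (\<omega> t)"
    and \<theta>_mono: "strict_mono_on {0..1} \<theta>" and \<omega>_mono: "strict_mono_on {0..1} \<omega>"
    and ends: "\<omega> 0 = \<theta> 0" "\<omega> 1 = \<theta> 1" and narrow: "\<theta> 1 - \<theta> 0 < pi"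
    and pair: "parallel_pair P t Q s"
  shows "\<omega> (1 - s) = \<theta> t"
proof -
  have t: "t \<in> {0..1}" and s: "s \<in> {0..1}" and par: "cross (vd P t) (vd Q s) = 0"
    using pair unfolding parallel_pair_def by auto
  have "vd P t = of_real (norm (vd P t)) * cis (\<theta> t)"
    "vd Q s = - of_real (norm (vd Q s)) * cis (\<omega> (1 - s))"
    using P_polar Q_polar[rule_format, of "1 - s"] t s by auto
  then have "cross (of_real (norm (vd P t)) * cis (\<theta> t))
      (- of_real (norm (vd Q s)) * cis (\<omega> (1 - s))) = 0"
    using par by metis
  moreover have "vd P t \<noteq> 0" "vd Q s \<noteq> 0"
    using smooth_regular_arc_vd_nonzero[OF P_arc] smooth_regular_arc_vd_nonzero[OF Q_arc] t s by auto
  ultimately have "cross (cis (\<theta> t)) (cis (\<omega> (1 - s))) = 0"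
    by simp
  moreover have "\<theta> t \<in> {\<theta> 0..\<theta> 1}" "\<omega> (1 - s) \<in> {\<theta> 0..\<theta> 1}"
    using strict_mono_on_leD[OF \<theta>_mono, of 0 t] strict_mono_on_leD[OF \<theta>_mono, of t 1]
      strict_mono_on_leD[OF \<omega>_mono, of 0 "1 - s"] strict_mono_on_leD[OF \<omega>_mono, of "1 - s" 1]
      t s ends by auto
  ultimately show ?thesis
    using cross_cis_eq_0_imp_eq narrow by metis
qed

lemma equal_radii_gives_asymptote:
  assumes P_arc: "smooth_regular_arc P" and Q_arc: "smooth_regular_arc Q"
    and P_polar: "\<forall>t\<in>{0..1}. vd P t = of_real (norm (vd P t)) * cis (\<theta> t)"
    and Q_polar: "\<forall>t\<in>{0..1}. vd Q (1 - t) = - of_real (norm (vd Q (1 - t))) * cis (\<omega> t)"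
    and \<theta>_mono: "strict_mono_on {0..1} \<theta>" and \<omega>_mono: "strict_mono_on {0..1} \<omega>"
    and ends: "\<omega> 0 = \<theta> 0" "\<omega> 1 = \<theta> 1" and narrow: "\<theta> 1 - \<theta> 0 < pi"
    and pair: "parallel_pair P t Q s'" and s: "s \<in> {0..1}" and angle: "\<theta> t = \<omega> s"
    and radii: "1 / curvature P t = - 1 / curvature Q (1 - s)"
  shows "gives_asymptote P t Q s'"
proof -
  have t: "t \<in> {0..1}" and s': "s' \<in> {0..1}"
    using pair unfolding parallel_pair_def by auto
  have angle': "\<omega> (1 - s') = \<theta> t"
    by (rule parallel_pair_tangent_angles_eq[OF P_arc Q_arc P_polar Q_polar \<theta>_mono \<omega>_mono ends
          narrow pair])
  then have "s' = 1 - s"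
    using strict_mono_on_eqD[OF \<omega>_mono, of s "1 - s'"] angle s s' by auto
  then have "inverse (curvature P t) = inverse (- curvature Q s')"
    using radii by (simp add: inverse_eq_divide)
  then have "curvature P t + curvature Q s' = 0"
    by (simp only: inverse_eq_iff_eq)
  moreover have "vd P t = of_real (norm (vd P t)) * cis (\<theta> t)"
    "vd Q s' = - of_real (norm (vd Q s')) * cis (\<theta> t)"
    using P_polar Q_polar[rule_format, of "1 - s'"] angle' t s' by auto
  moreover have "vd P t \<noteq> 0" "vd Q s' \<noteq> 0"
    using smooth_regular_arc_vd_nonzero[OF P_arc] smooth_regular_arc_vd_nonzero[OF Q_arc] t s' by auto
  ultimately show ?thesis
    using gives_asymptote_opposite_tangents[OF pair] by simp
qed

lemma reversed_turning_arcs_tangent_ratios_straddle_one: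
  assumes P_turn: "turning_arc P \<theta> \<rho>" and Q_turn: "turning_arc (\<lambda>t. Q (1 - t)) \<omega> \<sigma>"
    and Q_polar: "\<forall>t\<in>{0..1}. vd Q (1 - t) = - of_real (norm (vd Q (1 - t))) * cis (\<omega> t)"
    and Q_regular: "vd Q 0 \<noteq> 0" "vd Q 1 \<noteq> 0"
    and ends: "\<omega> 0 = \<theta> 0" "\<omega> 1 = \<theta> 1" and narrow: "\<theta> 1 - \<theta> 0 < pi"
    and radii: "\<forall>t\<in>{0..1}. \<forall>s\<in>{0..1}. \<theta> t = \<omega> s \<longrightarrow> \<rho> t \<noteq> \<sigma> s"
    and P_ends: "P 0 = p0" "P 1 = p1" and Q_ends: "Q 0 = q1" "Q 1 = q0"
  shows "Min (tangent_ratios p0 p1 q0 q1 Q) < 1 \<and> 1 < Max (tangent_ratios p0 p1 q0 q1 Q)"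
proof (rule tangent_ratios_straddle_one)
  show "0 < cross (cis (\<theta> 0)) (cis (\<theta> 1))"
    using turning_arc_angle_less[OF P_turn] narrow by (simp add: cross_cis sin_gt_zero)
  show "vd Q 1 = of_real (- norm (vd Q 1)) * cis (\<theta> 0)"
    "vd Q 0 = of_real (- norm (vd Q 0)) * cis (\<theta> 1)"
    using Q_polar[rule_format, of 0] Q_polar[rule_format, of 1] ends by simp_all
  show "p1 - p0 \<in> open_sector (cis (\<theta> 0)) (cis (\<theta> 1))"
    using turning_arc_chord_in_open_sector[OF P_turn narrow] P_ends by simp
  show "q1 - q0 \<in> open_sector (cis (\<theta> 0)) (cis (\<theta> 1))"
    using turning_arc_chord_in_open_sector[OF Q_turn] ends narrow Q_ends by simp
  show "(p1 - p0) - (q1 - q0) \<in> open_sector (cis (\<theta> 0)) (cis (\<theta> 1)) \<or>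
      (q1 - q0) - (p1 - p0) \<in> open_sector (cis (\<theta> 0)) (cis (\<theta> 1))"
    using turning_arcs_chord_difference_in_open_sector[OF P_turn Q_turn ends narrow radii]
      P_ends Q_ends by simp
qed (use Q_regular Q_ends in simp_all)

theorem theorem4p12:
  fixes P Q :: "real \<Rightarrow> complex" and p0 p1 q0 q1 :: complex
    and rP rQ :: real
  assumes P_arc: "smooth_regular_arc P" and Q_arc: "smooth_regular_arc Q"
    and P_ends: "P 0 = p0" "P 1 = p1"
    and Q_ends: "Q 0 = q1" "Q 1 = q0"
    and i0: "cross (vd P 0) (vd Q 1) = 0"
    and i1: "cross (vd P 1) (vd Q 0) = 0"
    and ii_P: "\<forall>t\<in>{0..1}. curvature P t > 0"
    and ii_Q: "\<forall>s\<in>{0..1}. curvature Q s < 0"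
    and iii_P: "rotation_number P rP" and iii_Q: "rotation_number Q rQ"
    and iii: "\<bar>rP\<bar> = \<bar>rQ\<bar>" "\<bar>rP\<bar> < 1/2"
    and iv_P: "\<forall>t\<in>{0..1}. \<exists>s\<in>{0..1}. parallel_pair P t Q s"
    and iv_Q: "\<forall>s\<in>{0..1}. \<exists>t\<in>{0..1}. parallel_pair P t Q s"
    and v: "\<forall>t\<in>{0..1}. \<forall>s\<in>{0..1}. parallel_pair P t Q s \<longrightarrow> curved_same_side P t Q s"
    and rho: "let p1' = transl (q0 - p0) p1;
                  l0 = line_through q0 (vd Q 0);
                  lp' = line_through p1' (vd Q 1);
                  c = line_inter lp' (tangent_line Q 0);
                  b0 = line_inter l0 lp';
                  b1 = line_inter (tangent_line Q 1) (tangent_line Q 0);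
                  R = {vquot (c - b1) (q1 - b1), vquot (c - b0) (p1' - b0)}
              in Max R < 1 \<or> Min R > 1"
  shows "CSS_has_asymptote [P, Q]"
proof (rule ccontr)
  assume no_asymptote: "\<not> CSS_has_asymptote [P, Q]"
  obtain s where pair: "parallel_pair P 0 Q s" and "s \<in> {0..1}"
    using iv_P[rule_format, of 0] by auto
  then have "curved_same_side P 0 Q s"
    using v by auto
  then obtain \<theta> \<omega> where P_turn: "turning_arc P \<theta> (\<lambda>t. 1 / curvature P t)"
    and Q_turn: "turning_arc (\<lambda>t. Q (1 - t)) \<omega> (\<lambda>t. - 1 / curvature Q (1 - t))"
    and P_polar: "\<forall>t\<in>{0..1}. vd P t = of_real (norm (vd P t)) * cis (\<theta> t)"
    and Q_polar: "\<forall>t\<in>{0..1}. vd Q (1 - t) = - of_real (norm (vd Q (1 - t))) * cis (\<omega> t)"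
    and ends: "\<omega> 0 = \<theta> 0" "\<omega> 1 = \<theta> 1" and narrow: "\<theta> 1 - \<theta> 0 < pi"
    using common_tangent_angles[OF P_arc Q_arc ii_P ii_Q iii_P iii_Q iii i0 pair] by blast
  have radii: "\<forall>t\<in>{0..1}. \<forall>s\<in>{0..1}. \<theta> t = \<omega> s \<longrightarrow> 1 / curvature P t \<noteq> - 1 / curvature Q (1 - s)"
  proof (intro ballI impI notI)
    fix t s assume "t \<in> {0..1}" "s \<in> {0..1}" "\<theta> t = \<omega> s" "1 / curvature P t = - 1 / curvature Q (1 - s)"
    moreover obtain s' where "parallel_pair P t Q s'"
      using iv_P \<open>t \<in> {0..1}\<close> by blast
    ultimately have "gives_asymptote P t Q s'"
      using equal_radii_gives_asymptote[OF P_arc Q_arc P_polar Q_polar] ends narrow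
        turning_arc_strict_mono[OF P_turn] turning_arc_strict_mono[OF Q_turn] by blast
    then show False
      using no_asymptote unfolding CSS_has_asymptote_def by auto
  qed
  have "Min (tangent_ratios p0 p1 q0 q1 Q) < 1 \<and> 1 < Max (tangent_ratios p0 p1 q0 q1 Q)"
    using smooth_regular_arc_vd_nonzero[OF Q_arc]
    by (intro reversed_turning_arcs_tangent_ratios_straddle_one[OF P_turn Q_turn Q_polar _ _ ends
        narrow radii P_ends Q_ends]) simp_all
  moreover have "Max (tangent_ratios p0 p1 q0 q1 Q) < 1 \<or> 1 < Min (tangent_ratios p0 p1 q0 q1 Q)"
    using rho unfolding tangent_ratios_def Let_def by simp
  ultimately show False
    by linarith
qed

end
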